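(* Let $n\ge p\ge 1$ and $m\ge 1$. Let $\bm f:\mathbb{R}^d\to\mathbb{R}^p$ be a fixed feature map $\bm f(\bm x)=(f_1(\bm x),\dots,f_p(\bm x))'$. Let $\{(\bm x_i,y_i)\}_{i=1}^n$ (training set) and $\{(\bm u_i,v_i)\}_{i=1}^m$ (testing set) be two independent samples of i.i.d. rows from a common joint distribution of $(\bm x,y)\in\mathbb{R}^d\times\mathbb{R}$, such that, conditionally on the predictors, the responses are independent with $y\mid \bm x\sim\mathcal N(\bm f(\bm x)'\bm\beta,\sigma^2)$ for some $\bm\beta\in\mathbb{R}^p$ and $\sigma^2>0$. Let $\bm F_x$ be the $n\times p$ matrix with $i$-th row $\bm f(\bm x_i)'$ and $\bm F_u$ the $m\times p$ matrix with $i$-th row $\bm f(\bm u_i)'$, and assume $\bm F_x$ has rank $p$ almost surely. Let $\hat{\bm\beta}=(\bm F_x'\bm F_x)^{-1}\bm F_x'\bm y$ with $\bm y=(y_1,\dots,y_n)'$, and $$\widehat{\mathcal E}=\frac1m\sum_{i=1}^m\{v_i-\bm f(\bm u_i)'\hat{\bm\beta}\}^2 .$$ Let $\bm A=\frac{n}{m}(\bm F_x'\bm F_x)^{-1}\bm F_u'\bm F_u$, and assume the expectations and variances below are finite. Then $$E\{\widehat{\mathcal E}\}=\sigma^2\Big\{1+\tfrac1n E_{\bm X}\{\mathrm{tr}(\bm A)\}\Big\},$$ $$\mathrm{var}\{\widehat{\mathcal E}\}=\sigma^4\Big\{\tfrac2m+\tfrac{4}{mn}E_{\bm X}\{\mathrm{tr}(\bm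 A)\}+\tfrac{2}{n^2}E_{\bm X}\{\mathrm{tr}(\bm A^2)\}+\tfrac{1}{n^2}\mathrm{var}_{\bm X}\{\mathrm{tr}(\bm A)\}\Big\}.$$
   Context: $\bm X$ denotes the collection of all predictor values $\bm x_1,\dots,\bm x_n,\bm u_1,\dots,\bm u_m$; $E_{\bm X}$ and $\mathrm{var}_{\bm X}$ denote expectation and variance with respect to the distribution of these predictor values. $E\{\cdot\}$ and $\mathrm{var}\{\cdot\}$ without subscript are taken over all randomness (predictors and responses). $\mathrm{tr}$ denotes the matrix trace. *)

theory Defs
  imports "HOL-Analysis.Analysis" "HOL-Probability.Probability"
begin

definition mat_trace :: "real^'p^'p \<Rightarrow> real" where
  "mat_trace A = (\<Sum>i\<in>UNIV. A $ i $ i)"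

definition design :: "('d \<Rightarrow> real^'p) \<Rightarrow> ('n \<Rightarrow> 'd) \<Rightarrow> real^'p^'n" where
  "design f z = (\<chi> i. f (z i))"

text \<open>Conditionally on X, Y is normal with mean (f X)' beta and standard deviation sigma:
  P(X in A, Y in B) = integral over A of N(f z' beta, sigma^2)(B) with respect to the law of X.\<close>
definition cond_normal :: "'w measure \<Rightarrow> ('w \<Rightarrow> real^'d) \<Rightarrow> ('w \<Rightarrow> real)
    \<Rightarrow> (real^'d \<Rightarrow> real^'p) \<Rightarrow> real^'p \<Rightarrow> real \<Rightarrow> bool" where
  "cond_normal M X Y f \<beta> \<sigma> \<longleftrightarrow>
     (\<forall>A\<in>sets (borel :: (real^'d) measure). \<forall>B\<in>sets (borel :: real measure).
        measure M {\<omega>\<in>space M. X \<omega> \<in> A \<and> Y \<omega> \<in> B} =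
        (\<integral>z. indicator A z * measure (density lborel (normal_density (f z \<bullet> \<beta>) \<sigma>)) B
           \<partial>(distr M borel X)))"

definition Expect :: "'w measure \<Rightarrow> ('w \<Rightarrow> real) \<Rightarrow> real" where
  "Expect M Z = (\<integral>\<omega>. Z \<omega> \<partial>M)"

definition Var :: "'w measure \<Rightarrow> ('w \<Rightarrow> real) \<Rightarrow> real" where
  "Var M Z = (\<integral>\<omega>. (Z \<omega> - Expect M Z)\<^sup>2 \<partial>M)"

end

theory Submission
  imports Defs
begin

text \<open>Each row \<open>(x, y)\<close> has the law of \<open>(z, f z \<bullet> \<beta> + \<sigma> e)\<close>, where \<open>z\<close> follows the
  predictor law and \<open>e\<close> is an independent standard normal variable. Conditionally on the predictors,
  the \<open>j\<close>-th test residual is therefore \<open>\<sigma>\<close> times a linear form \<open>c\<^sub>j \<bullet> e\<close> in the standard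
  normal vector \<open>e\<close> of all \<open>n + m\<close> noise terms, and the Gram matrix of the rows \<open>c\<^sub>j\<close> is
  \<open>I + B\<close> with \<open>B = F\<^sub>u (F\<^sub>x' F\<^sub>x)\<^sup>-\<^sup>1 F\<^sub>u'\<close>, whose trace is \<open>(m/n) tr A\<close> and whose
  squared Frobenius norm is \<open>(m/n)\<^sup>2 tr A\<^sup>2\<close>. Isserlis' formula for the fourth moments of a
  standard normal vector gives the first two conditional moments of \<open>\<Sum>\<^sub>j (c\<^sub>j \<bullet> e)\<^sup>2\<close>, and
  averaging them over the predictors yields the stated mean and variance.\<close>

section \<open>Standard normal variables and vectors\<close>

abbreviation std_normal :: "real measure" where
  "std_normal \<equiv> density lborel std_normal_density"

interpretation std_normal: prob_space std_normal
  by (rule prob_space_normal_density) simp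

definition std_normal_moment :: "nat \<Rightarrow> real" where
  "std_normal_moment k = (\<integral>t. t ^ k \<partial>std_normal)"

lemma integrable_std_normal_power: "integrable std_normal (\<lambda>t. t ^ k)"
  by (subst integrable_density) (auto simp: integrable_std_normal_moment)

lemma std_normal_moment_lborel:
  "std_normal_moment k = (\<integral>t. std_normal_density t * t ^ k \<partial>lborel)"
  unfolding std_normal_moment_def by (subst integral_density) auto

lemma std_normal_moment_0: "std_normal_moment 0 = 1"
  using std_normal.prob_space by (simp add: std_normal_moment_def)

lemma std_normal_moment_odd: "std_normal_moment (2 * k + 1) = 0"
  unfolding std_normal_moment_lborel by (rule integral_std_normal_moment_odd)

lemma std_normal_moment_even:
  "std_normal_moment (2 * k) = fact (2 * k) / (2 ^ k * fact k)"
  unfolding std_normal_moment_lborel by (rule integral_std_normal_moment_even)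

lemma std_normal_moments_up_to_4:
  "std_normal_moment (Suc 0) = 0" "std_normal_moment (Suc (Suc 0)) = 1"
  "std_normal_moment (Suc (Suc (Suc 0))) = 0" "std_normal_moment (Suc (Suc (Suc (Suc 0)))) = 3"
  using std_normal_moment_odd[of 0] std_normal_moment_odd[of 1]
    std_normal_moment_even[of 1] std_normal_moment_even[of 2]
  by (simp_all add: numeral_eq_Suc fact_numeral)

lemma sigma_finite_std_normal: "sigma_finite_measure std_normal"
  by (rule prob_space_imp_sigma_finite) (rule std_normal.prob_space_axioms)

lemma emeasure_std_normal_affine:
  assumes "\<sigma> > 0" and B: "B \<in> sets borel"
  shows "emeasure std_normal {e. c + \<sigma> * e \<in> B} = emeasure (density lborel (normal_density c \<sigma>)) B"
proof -
  have "distributed std_normal lborel (\<lambda>e. e) std_normal_density"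
    unfolding distributed_def by (auto simp: distr_id2)
  then have "distributed std_normal lborel (\<lambda>e. c + \<sigma> * e) (normal_density (c + \<sigma> * 0) (\<bar>\<sigma>\<bar> * 1))"
    by (rule std_normal.normal_density_affine) (use \<open>\<sigma> > 0\<close> in auto)
  then have "distr std_normal lborel (\<lambda>e. c + \<sigma> * e) = density lborel (normal_density c \<sigma>)"
    using \<open>\<sigma> > 0\<close> unfolding distributed_def by simp
  moreover have "emeasure (distr std_normal lborel (\<lambda>e. c + \<sigma> * e)) B
      = emeasure std_normal {e. c + \<sigma> * e \<in> B}"
    using B by (subst emeasure_distr) (auto intro!: arg_cong[where f="emeasure std_normal"])
  ultimately show ?thesis by simp
qed

abbreviation std_normal_vector :: "('k \<Rightarrow> real) measure" where
  "std_normal_vector \<equiv> PiM UNIV (\<lambda>_. std_normal)"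

interpretation std_normal_vector: product_prob_space "\<lambda>_::'k. std_normal" UNIV
  by (simp add: product_prob_space_def product_prob_space_axioms_def product_sigma_finite_def
      prob_space_imp_sigma_finite std_normal.prob_space_axioms)

lemma prob_space_std_normal_vector: "prob_space (std_normal_vector :: ('k::finite \<Rightarrow> real) measure)"
  by (rule prob_space_PiM) (simp add: std_normal.prob_space_axioms)

lemma prod_list_map_eq_prod_power_count:
  fixes e :: "'k::finite \<Rightarrow> 'a::comm_monoid_mult"
  shows "prod_list (map e ks) = (\<Prod>i\<in>UNIV. e i ^ count (mset ks) i)"
proof (induction ks)
  case (Cons k ks)
  have "count (mset (k # ks)) i = (if k = i then 1 else 0) + count (mset ks) i" for i
    by simp
  moreover have "(\<Prod>i\<in>UNIV. e i ^ (if k = i then 1 else 0)) = (\<Prod>i\<in>UNIV. if k = i then e i else 1)"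
    by (rule prod.cong) auto
  ultimately show ?case
    using Cons by (simp add: power_add prod.distrib)
qed simp

lemma integrable_std_normal_vector_monomial:
  "integrable std_normal_vector (\<lambda>e::'k::finite \<Rightarrow> real. prod_list (map e ks))"
  unfolding prod_list_map_eq_prod_power_count
  by (rule std_normal_vector.product_integrable_prod) (auto intro: integrable_std_normal_power)

lemma integral_std_normal_vector_monomial:
  "(\<integral>e. prod_list (map e ks) \<partial>std_normal_vector)
     = (\<Prod>i\<in>(UNIV::'k::finite set). std_normal_moment (count (mset ks) i))"
  unfolding prod_list_map_eq_prod_power_count std_normal_moment_def
  by (rule std_normal_vector.product_integral_prod) (auto intro: integrable_std_normal_power)

lemma prod_std_normal_moment_count:
  "(\<Prod>i\<in>(UNIV::'k::finite set). std_normal_moment (count (mset ks) i))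
     = (\<Prod>i\<in>set ks. std_normal_moment (count (mset ks) i))"
  by (rule prod.mono_neutral_right) (auto simp: std_normal_moment_0 count_mset_0_iff[THEN iffD2])

lemma integral_std_normal_vector_mult2:
  "(\<integral>e. e a * e b \<partial>std_normal_vector) = (if a = b then 1 else (0::real))"
  for a b :: "'k::finite"
  using integral_std_normal_vector_monomial[of "[a, b]"]
  unfolding prod_std_normal_moment_count
  by (cases "a = b") (simp_all add: std_normal_moments_up_to_4)

lemma integral_std_normal_vector_mult4:
  "(\<integral>e. e a * e b * e c * e d \<partial>std_normal_vector) =
     (if a = b \<and> c = d then 1 else 0) + (if a = c \<and> b = d then 1 else 0)
       + (if a = d \<and> b = c then 1 else (0::real))"
  for a b c d :: "'k::finite"
  using integral_std_normal_vector_monomial[of "[a, b, c, d]"]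
  unfolding prod_std_normal_moment_count
  by (cases "a = b"; cases "a = c"; cases "a = d"; cases "b = c"; cases "b = d"; cases "c = d")
     (simp_all add: std_normal_moments_up_to_4 mult.assoc insert_commute)

lemma integrable_std_normal_vector_mult4:
  "integrable std_normal_vector (\<lambda>e. e a * e b * e c * e d :: real)" for a b c d :: "'k::finite"
  using integrable_std_normal_vector_monomial[of "[a, b, c, d]"] by (simp add: mult.assoc)

lemma integrable_std_normal_vector_mult2:
  "integrable std_normal_vector (\<lambda>e. e a * e b :: real)" for a b :: "'k::finite"
  using integrable_std_normal_vector_monomial[of "[a, b]"] by simp

lemma square_linear_form:
  "(\<Sum>k\<in>UNIV. a k * e k)\<^sup>2 = (\<Sum>k1\<in>UNIV. \<Sum>k2\<in>UNIV. (a k1 * a k2) * (e k1 * e k2 :: real))"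
  by (simp add: power2_eq_square sum_product mult_ac)

lemma integral_std_normal_vector_square_linear_form:
  fixes a :: "'k::finite \<Rightarrow> real"
  shows "integrable std_normal_vector (\<lambda>e. (\<Sum>k\<in>UNIV. a k * e k)\<^sup>2)"
    and "(\<integral>e. (\<Sum>k\<in>UNIV. a k * e k)\<^sup>2 \<partial>std_normal_vector) = (\<Sum>k\<in>UNIV. (a k)\<^sup>2)"
proof -
  show "integrable std_normal_vector (\<lambda>e. (\<Sum>k\<in>UNIV. a k * e k)\<^sup>2)"
    unfolding square_linear_form
    by (intro Bochner_Integration.integrable_sum integrable_mult_right integrable_std_normal_vector_mult2)
  show "(\<integral>e. (\<Sum>k\<in>UNIV. a k * e k)\<^sup>2 \<partial>std_normal_vector) = (\<Sum>k\<in>UNIV. (a k)\<^sup>2)"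
    unfolding square_linear_form
    by (simp add: integrable_std_normal_vector_mult2 integral_std_normal_vector_mult2
        if_distrib[of "\<lambda>x. _ * x"] power2_eq_square cong: if_cong)
qed

lemma sum4_isserlis_pairings:
  fixes A B :: "'k::finite \<Rightarrow> 'k \<Rightarrow> real"
  shows "(\<Sum>k1\<in>UNIV. \<Sum>k2\<in>UNIV. \<Sum>k3\<in>UNIV. \<Sum>k4\<in>UNIV. A k1 k2 * B k3 k4 *
      ((if k1 = k2 \<and> k3 = k4 then 1 else 0) + (if k1 = k3 \<and> k2 = k4 then 1 else 0)
        + (if k1 = k4 \<and> k2 = k3 then 1 else 0)))
   = (\<Sum>k\<in>UNIV. A k k) * (\<Sum>k\<in>UNIV. B k k) + (\<Sum>k1\<in>UNIV. \<Sum>k2\<in>UNIV. A k1 k2 * B k1 k2)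
     + (\<Sum>k1\<in>UNIV. \<Sum>k2\<in>UNIV. A k1 k2 * B k2 k1)"
proof -
  have split: "A k1 k2 * B k3 k4 *
      ((if k1 = k2 \<and> k3 = k4 then 1 else 0) + (if k1 = k3 \<and> k2 = k4 then 1 else 0)
        + (if k1 = k4 \<and> k2 = k3 then 1 else 0))
     = (if k2 = k1 then (if k4 = k3 then A k1 k2 * B k3 k4 else 0) else 0)
       + (if k3 = k1 then (if k4 = k2 then A k1 k2 * B k3 k4 else 0) else 0)
       + (if k4 = k1 then (if k3 = k2 then A k1 k2 * B k3 k4 else 0) else 0)" for k1 k2 k3 k4
    by auto
  have sum_if_const: "(\<Sum>k\<in>UNIV. if P then g k else 0) = (if P then \<Sum>k\<in>UNIV. g k else 0)"
    for P and g :: "'k \<Rightarrow> real"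
    by simp
  show ?thesis
    unfolding split sum.distrib
    by (simp add: sum.delta sum.delta' sum_if_const sum_distrib_left sum_distrib_right)
       (rule sum.swap)
qed

lemma integral_std_normal_vector_square_linear_forms:
  fixes a b :: "'k::finite \<Rightarrow> real"
  shows "integrable std_normal_vector (\<lambda>e. (\<Sum>k\<in>UNIV. a k * e k)\<^sup>2 * (\<Sum>k\<in>UNIV. b k * e k)\<^sup>2)"
    and "(\<integral>e. (\<Sum>k\<in>UNIV. a k * e k)\<^sup>2 * (\<Sum>k\<in>UNIV. b k * e k)\<^sup>2 \<partial>std_normal_vector)
           = (\<Sum>k\<in>UNIV. (a k)\<^sup>2) * (\<Sum>k\<in>UNIV. (b k)\<^sup>2) + 2 * (\<Sum>k\<in>UNIV. a k * b k)\<^sup>2"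
proof -
  have expand: "(\<Sum>k\<in>UNIV. a k * e k)\<^sup>2 * (\<Sum>k\<in>UNIV. b k * e k)\<^sup>2 =
     (\<Sum>k1\<in>UNIV. \<Sum>k2\<in>UNIV. \<Sum>k3\<in>UNIV. \<Sum>k4\<in>UNIV.
        (a k1 * a k2) * (b k3 * b k4) * (e k1 * e k2 * e k3 * e k4))" for e
    unfolding square_linear_form sum_distrib_right unfolding sum_distrib_left by (simp add: mult_ac)
  show "integrable std_normal_vector (\<lambda>e. (\<Sum>k\<in>UNIV. a k * e k)\<^sup>2 * (\<Sum>k\<in>UNIV. b k * e k)\<^sup>2)"
    unfolding expand
    by (intro Bochner_Integration.integrable_sum integrable_mult_right integrable_std_normal_vector_mult4)
  show "(\<integral>e. (\<Sum>k\<in>UNIV. a k * e k)\<^sup>2 * (\<Sum>k\<in>UNIV. b k * e k)\<^sup>2 \<partial>std_normal_vector)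
      = (\<Sum>k\<in>UNIV. (a k)\<^sup>2) * (\<Sum>k\<in>UNIV. (b k)\<^sup>2) + 2 * (\<Sum>k\<in>UNIV. a k * b k)\<^sup>2"
    unfolding expand
    by (simp add: Bochner_Integration.integral_sum Bochner_Integration.integrable_sum
        integrable_std_normal_vector_mult4 integral_std_normal_vector_mult4 integral_mult_right_zero
        sum4_isserlis_pairings[of "\<lambda>k1 k2. a k1 * a k2" "\<lambda>k3 k4. b k3 * b k4"])
       (simp add: power2_eq_square sum_product mult_ac)
qed

lemma integral_std_normal_vector_sum_squares:
  fixes a :: "'j::finite \<Rightarrow> 'k::finite \<Rightarrow> real"
  shows "integrable std_normal_vector (\<lambda>e. \<Sum>j\<in>UNIV. (\<Sum>k\<in>UNIV. a j k * e k)\<^sup>2)"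
    and "(\<integral>e. (\<Sum>j\<in>UNIV. (\<Sum>k\<in>UNIV. a j k * e k)\<^sup>2) \<partial>std_normal_vector)
           = (\<Sum>j\<in>UNIV. \<Sum>k\<in>UNIV. (a j k)\<^sup>2)"
  by (simp_all add: Bochner_Integration.integrable_sum Bochner_Integration.integral_sum
      integral_std_normal_vector_square_linear_form)

lemma integral_std_normal_vector_sum_squares_squared:
  fixes a :: "'j::finite \<Rightarrow> 'k::finite \<Rightarrow> real"
  shows "integrable std_normal_vector (\<lambda>e. (\<Sum>j\<in>UNIV. (\<Sum>k\<in>UNIV. a j k * e k)\<^sup>2)\<^sup>2)"
    and "(\<integral>e. (\<Sum>j\<in>UNIV. (\<Sum>k\<in>UNIV. a j k * e k)\<^sup>2)\<^sup>2 \<partial>std_normal_vector)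
           = (\<Sum>j\<in>UNIV. \<Sum>l\<in>UNIV. (\<Sum>k\<in>UNIV. (a j k)\<^sup>2) * (\<Sum>k\<in>UNIV. (a l k)\<^sup>2)
                + 2 * (\<Sum>k\<in>UNIV. a j k * a l k)\<^sup>2)"
proof -
  have expand: "(\<Sum>j\<in>UNIV. (\<Sum>k\<in>UNIV. a j k * e k)\<^sup>2)\<^sup>2
      = (\<Sum>j\<in>UNIV. \<Sum>l\<in>UNIV. (\<Sum>k\<in>UNIV. a j k * e k)\<^sup>2 * (\<Sum>k\<in>UNIV. a l k * e k)\<^sup>2)" for e
    by (subst power2_eq_square) (rule sum_product)
  show "integrable std_normal_vector (\<lambda>e. (\<Sum>j\<in>UNIV. (\<Sum>k\<in>UNIV. a j k * e k)\<^sup>2)\<^sup>2)"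
    unfolding expand
    by (intro Bochner_Integration.integrable_sum integral_std_normal_vector_square_linear_forms(1))
  show "(\<integral>e. (\<Sum>j\<in>UNIV. (\<Sum>k\<in>UNIV. a j k * e k)\<^sup>2)\<^sup>2 \<partial>std_normal_vector)
      = (\<Sum>j\<in>UNIV. \<Sum>l\<in>UNIV. (\<Sum>k\<in>UNIV. (a j k)\<^sup>2) * (\<Sum>k\<in>UNIV. (a l k)\<^sup>2)
          + 2 * (\<Sum>k\<in>UNIV. a j k * a l k)\<^sup>2)"
    unfolding expand
    by (simp add: Bochner_Integration.integrable_sum Bochner_Integration.integral_sum
        integral_std_normal_vector_square_linear_forms)
qed

lemma integral_std_normal_vector_sum_squares_perturbed:
  fixes a :: "'j::finite \<Rightarrow> 'k::finite \<Rightarrow> real" and B :: "'j \<Rightarrow> 'j \<Rightarrow> real"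
  assumes rows: "\<And>j l. (\<Sum>k\<in>UNIV. a j k * a l k) = (if j = l then 1 else 0) + B j l"
  defines "q \<equiv> \<lambda>e. \<Sum>j\<in>UNIV. (\<Sum>k\<in>UNIV. a j k * e k)\<^sup>2"
  shows "(\<integral>e. q e \<partial>std_normal_vector) = real CARD('j) + (\<Sum>j\<in>UNIV. B j j)"
    and "(\<integral>e. (q e)\<^sup>2 \<partial>std_normal_vector) = (real CARD('j) + (\<Sum>j\<in>UNIV. B j j))\<^sup>2
           + 2 * (real CARD('j) + 2 * (\<Sum>j\<in>UNIV. B j j) + (\<Sum>j\<in>UNIV. \<Sum>l\<in>UNIV. (B j l)\<^sup>2))"
proof -
  have norms: "(\<Sum>k\<in>UNIV. (a j k)\<^sup>2) = 1 + B j j" for j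
    using rows[of j j] by (simp add: power2_eq_square)
  show "(\<integral>e. q e \<partial>std_normal_vector) = real CARD('j) + (\<Sum>j\<in>UNIV. B j j)"
    unfolding q_def integral_std_normal_vector_sum_squares(2) norms by (simp add: sum.distrib)
  have square: "((if j = l then 1 else 0) + B j l)\<^sup>2 = (if j = l then 1 + 2 * B j j else 0) + (B j l)\<^sup>2"
    for j l by (auto simp: power2_eq_square algebra_simps)
  have "(\<integral>e. (q e)\<^sup>2 \<partial>std_normal_vector) =
      (\<Sum>j\<in>UNIV. \<Sum>l\<in>UNIV. (1 + B j j) * (1 + B l l))
        + 2 * (\<Sum>j\<in>UNIV. \<Sum>l\<in>UNIV. ((if j = l then 1 else 0) + B j l)\<^sup>2)"
    unfolding q_def integral_std_normal_vector_sum_squares_squared(2) norms rows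
    by (simp only: sum.distrib sum_distrib_left)
  also have "\<dots> = (real CARD('j) + (\<Sum>j\<in>UNIV. B j j))\<^sup>2
           + 2 * (real CARD('j) + 2 * (\<Sum>j\<in>UNIV. B j j) + (\<Sum>j\<in>UNIV. \<Sum>l\<in>UNIV. (B j l)\<^sup>2))"
    unfolding square
    by (simp add: sum_product[symmetric] power2_eq_square sum.distrib sum_distrib_left[symmetric]
        sum_distrib_right[symmetric])
  finally show "(\<integral>e. (q e)\<^sup>2 \<partial>std_normal_vector) = (real CARD('j) + (\<Sum>j\<in>UNIV. B j j))\<^sup>2
           + 2 * (real CARD('j) + 2 * (\<Sum>j\<in>UNIV. B j j) + (\<Sum>j\<in>UNIV. \<Sum>l\<in>UNIV. (B j l)\<^sup>2))" .
qed

section \<open>Matrices\<close>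

lemma sets_borel_prod_eq_pair[measurable_cong]:
  "sets (borel :: ('a::second_countable_topology \<times> 'b::second_countable_topology) measure)
     = sets (borel \<Otimes>\<^sub>M borel)"
  by (metis borel_prod)

lemma borel_measurable_vec_nth[measurable (raw)]:
  fixes g :: "'a \<Rightarrow> 'b::euclidean_space^'n"
  assumes [measurable]: "g \<in> borel_measurable M"
  shows "(\<lambda>x. g x $ i) \<in> borel_measurable M"
proof -
  have "(\<lambda>v::'b^'n. v $ i) \<in> borel_measurable borel"
    by (intro borel_measurable_continuous_onI continuous_on_component continuous_on_id)
  then show ?thesis by measurable
qed

lemma borel_measurable_vec_lambda[measurable (raw)]:
  fixes h :: "'n::finite \<Rightarrow> 'a \<Rightarrow> 'b::euclidean_space"
  assumes [measurable]: "\<And>i. h i \<in> borel_measurable M"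
  shows "(\<lambda>x. \<chi> i. h i x) \<in> borel_measurable M"
proof (subst borel_measurable_euclidean_space, intro ballI)
  fix b :: "'b^'n" assume "b \<in> Basis"
  then obtain i u where b: "b = axis i u" "u \<in> Basis" by (auto simp: Basis_vec_def)
  have "(\<lambda>x. (\<chi> i. h i x) \<bullet> axis i u) = (\<lambda>x. h i x \<bullet> u)"
    by (simp add: inner_axis)
  then show "(\<lambda>x. (\<chi> i. h i x) \<bullet> b) \<in> borel_measurable M" unfolding b by simp
qed

lemma borel_measurable_det[measurable (raw)]:
  fixes g :: "'a \<Rightarrow> real^'n::finite^'n"
  assumes [measurable]: "g \<in> borel_measurable M"
  shows "(\<lambda>x. det (g x)) \<in> borel_measurable M"
  unfolding det_def by measurable

lemma borel_measurable_matrix_matrix_mult[measurable (raw)]: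
  fixes g :: "'a \<Rightarrow> real^'k::finite^'n::finite" and h :: "'a \<Rightarrow> real^'l::finite^'k"
  assumes [measurable]: "g \<in> borel_measurable M" "h \<in> borel_measurable M"
  shows "(\<lambda>x. g x ** h x) \<in> borel_measurable M"
  unfolding matrix_matrix_mult_def by measurable

lemma borel_measurable_matrix_vector_mult[measurable (raw)]:
  fixes g :: "'a \<Rightarrow> real^'k::finite^'n::finite" and h :: "'a \<Rightarrow> real^'k"
  assumes [measurable]: "g \<in> borel_measurable M" "h \<in> borel_measurable M"
  shows "(\<lambda>x. g x *v h x) \<in> borel_measurable M"
  unfolding matrix_vector_mult_def by measurable

lemma borel_measurable_transpose[measurable (raw)]:
  fixes g :: "'a \<Rightarrow> real^'k::finite^'n::finite"
  assumes [measurable]: "g \<in> borel_measurable M"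
  shows "(\<lambda>x. transpose (g x)) \<in> borel_measurable M"
  unfolding transpose_def by measurable

lemma borel_measurable_mat_trace[measurable (raw)]:
  fixes g :: "'a \<Rightarrow> real^'k::finite^'k"
  assumes [measurable]: "g \<in> borel_measurable M"
  shows "(\<lambda>x. mat_trace (g x)) \<in> borel_measurable M"
  unfolding mat_trace_def by measurable

lemma borel_measurable_design[measurable (raw)]:
  fixes z :: "'n::finite \<Rightarrow> 'a \<Rightarrow> real^'d::finite"
  assumes [measurable]: "f \<in> borel_measurable borel" "\<And>i. z i \<in> borel_measurable M"
  shows "(\<lambda>x. design f (\<lambda>i. z i x)) \<in> borel_measurable M"
  unfolding design_def by measurable

text \<open>matrix_inv is defined by choice, which defeats measurability arguments;
  Cramer's rule gives an explicit formula that agrees with it on invertible matrices.\<close>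
definition cramer_inverse :: "real^'n^'n \<Rightarrow> real^'n^'n" where
  "cramer_inverse G = (\<chi> r c. det (\<chi> i j. if j = r then (if i = c then 1 else 0) else G$i$j) / det G)"

lemma borel_measurable_cramer_inverse[measurable (raw)]:
  fixes g :: "'a \<Rightarrow> real^'n::finite^'n"
  assumes [measurable]: "g \<in> borel_measurable M"
  shows "(\<lambda>x. cramer_inverse (g x)) \<in> borel_measurable M"
  unfolding cramer_inverse_def by measurable

lemma matrix_inv_mult:
  fixes G :: "real^'n::finite^'n"
  assumes "det G \<noteq> 0"
  shows "G ** matrix_inv G = mat 1" "matrix_inv G ** G = mat 1"
proof -
  have "invertible G" using assms by (simp add: invertible_det_nz)
  then have "\<exists>G'. G ** G' = mat 1 \<and> G' ** G = mat 1" unfolding invertible_def .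
  then have "G ** matrix_inv G = mat 1 \<and> matrix_inv G ** G = mat 1"
    unfolding matrix_inv_def by (rule someI_ex)
  then show "G ** matrix_inv G = mat 1" "matrix_inv G ** G = mat 1" by auto
qed

lemma matrix_inv_eq_cramer_inverse:
  fixes G :: "real^'n::finite^'n"
  assumes det: "det G \<noteq> 0"
  shows "matrix_inv G = cramer_inverse G"
proof -
  let ?K = "matrix_inv G"
  have "?K $ r $ c = det (\<chi> i j. if j = r then (if i = c then 1 else 0) else G$i$j) / det G" for r c
  proof -
    have "G *v (?K *v axis c 1) = axis c 1"
      by (simp add: matrix_vector_mul_assoc matrix_inv_mult(1)[OF det])
    then have "?K *v axis c 1 = (\<chi> k. det (\<chi> i j. if j = k then axis c 1 $ i else G$i$j) / det G)"
      using cramer[OF det] by blast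
    moreover have "(?K *v axis c 1) $ r = ?K $ r $ c"
      by (simp add: matrix_vector_mult_def axis_def if_distrib[of "\<lambda>x. _ * x"] cong: if_cong)
    moreover have "(\<chi> i j. if j = r then axis c 1 $ i else G$i$j)
        = (\<chi> i j. if j = r then (if i = c then 1 else 0) else G$i$j)"
      by (simp add: axis_def vec_eq_iff)
    ultimately show ?thesis by simp
  qed
  then show ?thesis unfolding cramer_inverse_def by (simp add: vec_eq_iff)
qed

definition gram :: "real^'p^'n \<Rightarrow> real^'p^'p" where
  "gram X = transpose X ** X"

lemma borel_measurable_gram[measurable (raw)]:
  fixes g :: "'a \<Rightarrow> real^'p::finite^'n::finite"
  assumes [measurable]: "g \<in> borel_measurable M"
  shows "(\<lambda>x. gram (g x)) \<in> borel_measurable M"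
  unfolding gram_def by measurable

lemma transpose_gram: "transpose (gram X) = gram X"
  by (simp add: gram_def matrix_transpose_mul)

lemma inner_matrix_vector_mult_transpose: "((A::real^'n^'m) *v x) \<bullet> y = x \<bullet> (transpose A *v y)"
  by (metis dot_lmul_matrix vector_transpose_matrix)

lemma inner_gram_mult: "p \<bullet> (gram X *v q) = (X *v p) \<bullet> (X *v q)"
  by (simp add: gram_def inner_matrix_vector_mult_transpose matrix_vector_mul_assoc)

lemma det_gram_nonzero:
  fixes X :: "real^'p::finite^'n::finite"
  assumes "rank X = CARD('p)"
  shows "det (gram X) \<noteq> 0"
proof
  assume "det (gram X) = 0"
  then have "rank (gram X) \<noteq> CARD('p)" by (simp add: det_eq_0_rank)
  then obtain v where v: "v \<noteq> 0" "gram X *v v = 0"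
    using matrix_nonfull_linear_equations_eq by blast
  then have "X *v v = 0" using inner_gram_mult[of v X v] by simp
  moreover have "inj ((*v) X)" using assms by (simp add: full_rank_injective)
  ultimately show False using v by (metis injD matrix_vector_mult_0_right)
qed

lemma transpose_left_inverse_symmetric:
  fixes K G :: "real^'n::finite^'n"
  assumes "transpose G = G" "K ** G = mat 1"
  shows "transpose K = K"
proof -
  have GK: "G ** transpose K = mat 1"
    using arg_cong[OF assms(2), of transpose] assms(1) by (simp add: matrix_transpose_mul transpose_mat)
  have "transpose K = (K ** G) ** transpose K" by (simp add: assms(2))
  also have "\<dots> = K ** (G ** transpose K)" by (simp add: matrix_mul_assoc)
  also have "\<dots> = K" by (simp add: GK)
  finally show ?thesis .
qed

lemma cramer_inverse_gram:
  fixes X :: "real^'p::finite^'n::finite"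
  assumes "det (gram X) \<noteq> 0"
  shows "cramer_inverse (gram X) ** gram X = mat 1"
    and "transpose (cramer_inverse (gram X)) = cramer_inverse (gram X)"
proof -
  show inv: "cramer_inverse (gram X) ** gram X = mat 1"
    using matrix_inv_mult(2)[OF assms] by (simp add: matrix_inv_eq_cramer_inverse[OF assms])
  show "transpose (cramer_inverse (gram X)) = cramer_inverse (gram X)"
    by (rule transpose_left_inverse_symmetric[OF transpose_gram inv])
qed

lemma inner_mult_transpose_expand:
  "h \<bullet> (K *v (transpose X *v v)) = (\<Sum>i\<in>UNIV. v$i * (h \<bullet> (K *v X$i)))"
  for X :: "real^'p::finite^'n::finite"
proof -
  have "h \<bullet> (K *v (transpose X *v v)) = (\<Sum>a\<in>UNIV. \<Sum>b\<in>UNIV. \<Sum>i\<in>UNIV. h$a * K$a$b * X$i$b * v$i)"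
    by (simp add: inner_vec_def matrix_vector_mult_def transpose_def sum_distrib_left mult_ac)
  also have "\<dots> = (\<Sum>a\<in>UNIV. \<Sum>i\<in>UNIV. \<Sum>b\<in>UNIV. h$a * K$a$b * X$i$b * v$i)"
    by (rule sum.cong[OF refl], rule sum.swap)
  also have "\<dots> = (\<Sum>i\<in>UNIV. \<Sum>a\<in>UNIV. \<Sum>b\<in>UNIV. h$a * K$a$b * X$i$b * v$i)"
    by (rule sum.swap)
  also have "\<dots> = (\<Sum>i\<in>UNIV. v$i * (h \<bullet> (K *v X$i)))"
    by (simp add: inner_vec_def matrix_vector_mult_def sum_distrib_left mult_ac)
  finally show ?thesis .
qed

lemma inner_ols_fit_linear_response:
  fixes X :: "real^'p::finite^'n::finite" and K :: "real^'p^'p"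
  assumes "K ** gram X = mat 1"
  shows "h \<bullet> (K *v (transpose X *v (\<chi> i. X$i \<bullet> \<beta> + \<sigma> * e i))) =
     h \<bullet> \<beta> + \<sigma> * (\<Sum>i\<in>UNIV. e i * (h \<bullet> (K *v X$i)))"
proof -
  have response: "(\<chi> i. X$i \<bullet> \<beta> + \<sigma> * e i) = X *v \<beta> + \<sigma> *\<^sub>R (\<chi> i. e i)"
    by (simp add: vec_eq_iff matrix_vector_mul_component)
  have fit: "K *v (transpose X *v (X *v \<beta> + \<sigma> *\<^sub>R (\<chi> i. e i))) =
      \<beta> + \<sigma> *\<^sub>R (K *v (transpose X *v (\<chi> i. e i)))"
    using assms
    by (simp add: gram_def matrix_vector_right_distrib matrix_vector_mul_assoc matrix_vector_mult_scaleR)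
  show ?thesis
    unfolding response fit inner_add_right inner_scaleR_right inner_mult_transpose_expand by simp
qed

lemma sum_inner_hat_products:
  fixes X :: "real^'p::finite^'n::finite" and K :: "real^'p^'p"
  assumes inv: "K ** gram X = mat 1" and sym: "transpose K = K"
  shows "(\<Sum>i\<in>UNIV. (h \<bullet> (K *v X$i)) * (h' \<bullet> (K *v X$i))) = h \<bullet> (K *v h')"
proof -
  have K_left: "h \<bullet> (K *v g) = (K *v h) \<bullet> g" for h g :: "real^'p"
    by (metis inner_commute inner_matrix_vector_mult_transpose sym)
  have "h \<bullet> (K *v X$i) = (X *v (K *v h)) $ i" for h i
    by (simp add: matrix_vector_mul_component K_left inner_commute)
  then have "(\<Sum>i\<in>UNIV. (h \<bullet> (K *v X$i)) * (h' \<bullet> (K *v X$i))) = (X *v (K *v h)) \<bullet> (X *v (K *v h'))"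
    unfolding inner_vec_def by simp
  also have "\<dots> = (K *v h) \<bullet> (gram X *v (K *v h'))"
    by (rule inner_gram_mult[symmetric])
  also have "\<dots> = h \<bullet> (K *v (gram X *v (K *v h')))"
    by (rule K_left[symmetric])
  also have "\<dots> = h \<bullet> (K *v h')"
    by (simp add: matrix_vector_mul_assoc matrix_mul_assoc inv)
  finally show ?thesis .
qed

lemma mult_gram_entry:
  "(K ** gram U) $ a $ b = (\<Sum>j\<in>UNIV. (K *v U$j)$a * U$j$b)" for U :: "real^'p^'m::finite"
proof -
  have "(K ** gram U) $ a $ b = (\<Sum>c\<in>UNIV. \<Sum>j\<in>UNIV. K$a$c * U$j$c * U$j$b)"
    by (simp add: gram_def matrix_matrix_mult_def transpose_def sum_distrib_left mult_ac)
  also have "\<dots> = (\<Sum>j\<in>UNIV. \<Sum>c\<in>UNIV. K$a$c * U$j$c * U$j$b)"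
    by (rule sum.swap)
  also have "\<dots> = (\<Sum>j\<in>UNIV. (K *v U$j)$a * U$j$b)"
    by (simp add: matrix_vector_mult_def sum_distrib_right)
  finally show ?thesis .
qed

lemma mat_trace_mult_gram: "mat_trace (K ** gram U) = (\<Sum>j\<in>UNIV. U$j \<bullet> (K *v U$j))"
  for U :: "real^'p::finite^'m::finite"
  unfolding mat_trace_def mult_gram_entry
  by (subst sum.swap) (simp add: inner_vec_def mult.commute)

lemma mat_trace_square_mult_gram:
  "mat_trace ((K ** gram U) ** (K ** gram U)) =
     (\<Sum>j\<in>UNIV. \<Sum>l\<in>UNIV. (U$l \<bullet> (K *v U$j)) * (U$j \<bullet> (K *v U$l)))"
  for U :: "real^'p::finite^'m::finite"
proof -
  let ?F = "\<lambda>a b j l. (K *v U$j)$a * U$j$b * ((K *v U$l)$b * U$l$a)"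
  have trace_square: "mat_trace (N ** N) = (\<Sum>a\<in>UNIV. \<Sum>b\<in>UNIV. N$a$b * N$b$a)" for N :: "real^'p^'p"
    by (simp add: mat_trace_def matrix_matrix_mult_def)
  have "mat_trace ((K ** gram U) ** (K ** gram U)) =
     (\<Sum>a\<in>UNIV. \<Sum>b\<in>UNIV. \<Sum>j\<in>UNIV. \<Sum>l\<in>UNIV. ?F a b j l)"
    unfolding trace_square mult_gram_entry sum_product ..
  also have "\<dots> = (\<Sum>j\<in>UNIV. \<Sum>l\<in>UNIV. \<Sum>a\<in>UNIV. \<Sum>b\<in>UNIV. ?F a b j l)"
    by (subst (2) sum.swap, subst sum.swap, subst (3) sum.swap, subst (2) sum.swap) (rule refl)
  also have "\<dots> = (\<Sum>j\<in>UNIV. \<Sum>l\<in>UNIV. \<Sum>b\<in>UNIV. \<Sum>a\<in>UNIV. ?F a b j l)"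
    by (rule sum.cong[OF refl], rule sum.cong[OF refl], rule sum.swap)
  also have "\<dots> = (\<Sum>j\<in>UNIV. \<Sum>l\<in>UNIV. (U$l \<bullet> (K *v U$j)) * (U$j \<bullet> (K *v U$l)))"
    by (simp add: inner_vec_def sum_product mult_ac)
  finally show ?thesis .
qed

lemma sum_UNIV_Plus:
  "(\<Sum>k\<in>UNIV. g k) = (\<Sum>i\<in>UNIV. g (Inl i)) + (\<Sum>j\<in>UNIV. g (Inr j))"
  for g :: "'a::finite + 'b::finite \<Rightarrow> 'c::comm_monoid_add"
  using sum.Plus[of "UNIV :: 'a set" "UNIV :: 'b set" g] by (simp add: comp_def)

lemma mat_trace_scaleR: "mat_trace (c *\<^sub>R N) = c * mat_trace N"
  by (simp add: mat_trace_def sum_distrib_left)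

section \<open>The test error given the predictors\<close>

definition ols_estimate :: "real^'p^'n \<Rightarrow> real^'n \<Rightarrow> real^'p" where
  "ols_estimate X y = cramer_inverse (gram X) *v (transpose X *v y)"

definition ols_test_error ::
    "(real^'d \<Rightarrow> real^'p) \<Rightarrow> ('n::finite + 'm::finite \<Rightarrow> (real^'d) \<times> real) \<Rightarrow> real" where
  "ols_test_error f w = (1 / real CARD('m)) * (\<Sum>j\<in>UNIV. (snd (w (Inr j)) - f (fst (w (Inr j))) \<bullet>
      ols_estimate (design f (\<lambda>i. fst (w (Inl i)))) (\<chi> i. snd (w (Inl i))))\<^sup>2)"

definition gram_ratio :: "(real^'d \<Rightarrow> real^'p) \<Rightarrow> ('n::finite + 'm::finite \<Rightarrow> real^'d) \<Rightarrow> real^'p^'p" where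
  "gram_ratio f xs = (real CARD('n) / real CARD('m)) *\<^sub>R
     (cramer_inverse (gram (design f (\<lambda>i. xs (Inl i)))) ** gram (design f (\<lambda>j. xs (Inr j))))"

definition linear_model_row ::
    "(real^'d \<Rightarrow> real^'p) \<Rightarrow> real^'p \<Rightarrow> real \<Rightarrow> (real^'d) \<times> real \<Rightarrow> (real^'d) \<times> real"
  where "linear_model_row f \<beta> \<sigma> = (\<lambda>(z, e). (z, f z \<bullet> \<beta> + \<sigma> * e))"

definition linear_model_sample ::
    "(real^'d \<Rightarrow> real^'p) \<Rightarrow> real^'p \<Rightarrow> real \<Rightarrow> ('k \<Rightarrow> real^'d) \<times> ('k \<Rightarrow> real) \<Rightarrow> 'k \<Rightarrow> (real^'d) \<times> real"
  where "linear_model_sample f \<beta> \<sigma> p k = linear_model_row f \<beta> \<sigma> (fst p k, snd p k)"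

lemma borel_measurable_ols_test_error[measurable]:
  assumes [measurable]: "f \<in> borel_measurable borel"
  shows "(ols_test_error f :: ('n::finite + 'm::finite \<Rightarrow> (real^'d::finite) \<times> real) \<Rightarrow> real)
           \<in> borel_measurable (PiM UNIV (\<lambda>_. borel))"
  unfolding ols_test_error_def[abs_def] ols_estimate_def by measurable

lemma borel_measurable_gram_ratio[measurable]:
  assumes [measurable]: "f \<in> borel_measurable borel"
  shows "(gram_ratio f :: ('n::finite + 'm::finite \<Rightarrow> real^'d::finite) \<Rightarrow> real^'p::finite^'p)
           \<in> borel_measurable (PiM UNIV (\<lambda>_. borel))"
  unfolding gram_ratio_def[abs_def] by measurable

definition residual_coefficients :: "real^'p^'n \<Rightarrow> real^'p^'m \<Rightarrow> real^'p^'p \<Rightarrow> 'm \<Rightarrow> 'n + 'm \<Rightarrow> real"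
  where "residual_coefficients X U K j k =
    (case k of Inl i \<Rightarrow> - (U$j \<bullet> (K *v X$i)) | Inr l \<Rightarrow> if l = j then 1 else 0)"

lemma test_residual_eq_residual_coefficients:
  fixes X :: "real^'p::finite^'n::finite" and U :: "real^'p^'m::finite" and K :: "real^'p^'p"
  assumes "K ** gram X = mat 1"
  shows "U$j \<bullet> \<beta> + \<sigma> * e (Inr j) - U$j \<bullet> (K *v (transpose X *v (\<chi> i. X$i \<bullet> \<beta> + \<sigma> * e (Inl i))))
    = \<sigma> * (\<Sum>k\<in>UNIV. residual_coefficients X U K j k * e k)"
proof -
  have noise: "(\<Sum>k\<in>UNIV. residual_coefficients X U K j k * e k)
      = e (Inr j) - (\<Sum>i\<in>UNIV. e (Inl i) * (U$j \<bullet> (K *v X$i)))"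
    by (simp add: sum_UNIV_Plus residual_coefficients_def sum_negf mult.commute
        if_distrib[of "\<lambda>x. _ * x"] cong: if_cong)
  show ?thesis
    unfolding noise inner_ols_fit_linear_response[OF assms] by (simp add: algebra_simps)
qed

lemma inner_residual_coefficients:
  fixes X :: "real^'p::finite^'n::finite" and U :: "real^'p^'m::finite" and K :: "real^'p^'p"
  assumes "K ** gram X = mat 1" "transpose K = K"
  shows "(\<Sum>k\<in>UNIV. residual_coefficients X U K j k * residual_coefficients X U K l k)
    = (if j = l then 1 else 0) + U$j \<bullet> (K *v U$l)"
  using sum_inner_hat_products[OF assms, of "U$j" "U$l"]
  by (simp add: sum_UNIV_Plus residual_coefficients_def if_distrib[of "\<lambda>x. x * _"] cong: if_cong)

lemma ols_test_error_conditional_moments: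
  fixes f :: "real^'d::finite \<Rightarrow> real^'p::finite" and xs :: "'n::finite + 'm::finite \<Rightarrow> real^'d"
    and \<beta> :: "real^'p" and \<sigma> :: real
  assumes det: "det (gram (design f (\<lambda>i. xs (Inl i)))) \<noteq> 0"
  defines "E \<equiv> \<lambda>e. ols_test_error f (linear_model_sample f \<beta> \<sigma> (xs, e))"
    and "t \<equiv> mat_trace (gram_ratio f xs)" and "s \<equiv> mat_trace (gram_ratio f xs ** gram_ratio f xs)"
    and "n \<equiv> real CARD('n)" and "m \<equiv> real CARD('m)"
  shows "(\<integral>e. E e \<partial>std_normal_vector) = \<sigma>\<^sup>2 * (1 + t / n)"
    and "(\<integral>e. (E e)\<^sup>2 \<partial>std_normal_vector)
           = \<sigma> ^ 4 * ((1 + t / n)\<^sup>2 + 2 / m + 4 / (m * n) * t + 2 / n\<^sup>2 * s)"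
proof -
  define X where "X = design f (\<lambda>i. xs (Inl i))"
  define U where "U = design f (\<lambda>j. xs (Inr j))"
  define K where "K = cramer_inverse (gram X)"
  define B where "B j l = U$j \<bullet> (K *v U$l)" for j l
  let ?c = "residual_coefficients X U K"
  have inv: "K ** gram X = mat 1" and sym: "transpose K = K"
    using cramer_inverse_gram[OF det] by (simp_all add: K_def X_def)
  have "f (xs (Inr j)) = U$j" "f (xs (Inl i)) = X$i" for i j
    by (simp_all add: U_def X_def design_def)
  then have error: "E e = \<sigma>\<^sup>2 / m * (\<Sum>j\<in>UNIV. (\<Sum>k\<in>UNIV. ?c j k * e k)\<^sup>2)" for e
    unfolding E_def ols_test_error_def
    by (simp add: linear_model_sample_def linear_model_row_def ols_estimate_def m_def
        test_residual_eq_residual_coefficients[OF inv] power_mult_distrib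
        del: transpose_matrix_vector flip: X_def K_def)
       (simp add: sum_distrib_left)
  have rows: "(\<Sum>k\<in>UNIV. ?c j k * ?c l k) = (if j = l then 1 else 0) + B j l" for j l
    unfolding B_def by (rule inner_residual_coefficients[OF inv sym])
  have B_sym: "B l j = B j l" for j l
    unfolding B_def by (metis inner_commute inner_matrix_vector_mult_transpose sym)
  have "gram_ratio f xs = (n / m) *\<^sub>R (K ** gram U)"
    by (simp add: gram_ratio_def n_def m_def K_def X_def U_def)
  then have traces: "(\<Sum>j\<in>UNIV. B j j) = m / n * t" "(\<Sum>j\<in>UNIV. \<Sum>l\<in>UNIV. (B j l)\<^sup>2) = (m / n)\<^sup>2 * s"
    using mat_trace_square_mult_gram[of K U] B_sym unfolding t_def s_def B_def
    by (simp_all add: mat_trace_scaleR mat_trace_mult_gram scalar_matrix_assoc[symmetric]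
        matrix_scalar_ac n_def m_def power2_eq_square)
  have "n > 0" "m > 0"
    by (simp_all add: n_def m_def)
  note moments = integral_std_normal_vector_sum_squares_perturbed[of ?c B, OF rows, folded m_def,
      unfolded traces]
  show "(\<integral>e. E e \<partial>std_normal_vector) = \<sigma>\<^sup>2 * (1 + t / n)"
    unfolding error integral_mult_right_zero moments(1) using \<open>n > 0\<close> \<open>m > 0\<close>
    by (simp add: field_simps)
  show "(\<integral>e. (E e)\<^sup>2 \<partial>std_normal_vector)
      = \<sigma> ^ 4 * ((1 + t / n)\<^sup>2 + 2 / m + 4 / (m * n) * t + 2 / n\<^sup>2 * s)"
    unfolding error power_mult_distrib integral_mult_right_zero moments(2) using \<open>n > 0\<close> \<open>m > 0\<close>
    by (simp add: field_simps power2_eq_square power4_eq_xxxx)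
qed

section \<open>Measure theory\<close>

lemma emeasure_PiM_pair_measure_componentwise:
  fixes \<mu> :: "'a measure" and \<nu> :: "'b measure" and B :: "'k::finite \<Rightarrow> ('a \<times> 'b) set"
  assumes \<mu>: "prob_space \<mu>" and \<nu>: "prob_space \<nu>" and B: "\<And>k. B k \<in> sets (\<mu> \<Otimes>\<^sub>M \<nu>)"
  defines "XE \<equiv> PiM UNIV (\<lambda>_. \<mu>) \<Otimes>\<^sub>M PiM UNIV (\<lambda>_. \<nu>)"
  shows "emeasure XE {p \<in> space XE. \<forall>k. (fst p k, snd p k) \<in> B k} = (\<Prod>k\<in>UNIV. emeasure (\<mu> \<Otimes>\<^sub>M \<nu>) (B k))"
proof -
  interpret X: product_prob_space "\<lambda>_::'k. \<mu>" UNIV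
    using \<mu> by (simp add: product_prob_space_def product_prob_space_axioms_def product_sigma_finite_def
        prob_space_imp_sigma_finite)
  interpret E: product_prob_space "\<lambda>_::'k. \<nu>" UNIV
    using \<nu> by (simp add: product_prob_space_def product_prob_space_axioms_def product_sigma_finite_def
        prob_space_imp_sigma_finite)
  have \<nu>_sigma_finite: "sigma_finite_measure \<nu>"
    using \<nu> by (rule prob_space_imp_sigma_finite)
  have E_sigma_finite: "sigma_finite_measure (PiM UNIV (\<lambda>_::'k. \<nu>))"
    using \<nu> by (intro prob_space_imp_sigma_finite prob_space_PiM) simp
  let ?S = "{p \<in> space XE. \<forall>k. (fst p k, snd p k) \<in> B k}"
  have [measurable]: "B k \<in> sets (\<mu> \<Otimes>\<^sub>M \<nu>)" for k
    by (rule B)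
  have "?S \<in> sets XE"
    unfolding XE_def by measurable
  then have "emeasure XE ?S = (\<integral>\<^sup>+xs. emeasure (PiM UNIV (\<lambda>_. \<nu>)) (Pair xs -` ?S) \<partial>PiM UNIV (\<lambda>_. \<mu>))"
    unfolding XE_def by (rule sigma_finite_measure.emeasure_pair_measure_alt[OF E_sigma_finite])
  also have "\<dots> = (\<integral>\<^sup>+xs. (\<Prod>k\<in>UNIV. emeasure \<nu> (Pair (xs k) -` B k)) \<partial>PiM UNIV (\<lambda>_. \<mu>))"
  proof (intro nn_integral_cong)
    fix xs assume "xs \<in> space (PiM (UNIV :: 'k set) (\<lambda>_. \<mu>))"
    then have "Pair xs -` ?S = Pi\<^sub>E UNIV (\<lambda>k. Pair (xs k) -` B k)"
      using sets.sets_into_space[OF B] unfolding XE_def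
      by (fastforce simp: space_pair_measure space_PiM PiE_iff)
    then show "emeasure (PiM UNIV (\<lambda>_. \<nu>)) (Pair xs -` ?S) = (\<Prod>k\<in>UNIV. emeasure \<nu> (Pair (xs k) -` B k))"
      by (simp add: E.emeasure_PiM sets_Pair1[OF B])
  qed
  also have "\<dots> = (\<Prod>k\<in>UNIV. \<integral>\<^sup>+z. emeasure \<nu> (Pair z -` B k) \<partial>\<mu>)"
    by (rule X.product_nn_integral_prod)
       (simp, rule sigma_finite_measure.measurable_emeasure_Pair[OF \<nu>_sigma_finite B])
  also have "\<dots> = (\<Prod>k\<in>UNIV. emeasure (\<mu> \<Otimes>\<^sub>M \<nu>) (B k))"
    by (simp add: sigma_finite_measure.emeasure_pair_measure_alt[OF \<nu>_sigma_finite B])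
  finally show ?thesis .
qed

lemma PiM_distr_pair_measure:
  fixes \<mu> :: "'a measure" and \<nu> :: "'b measure" and T :: "'a \<times> 'b \<Rightarrow> 'c"
  assumes \<mu>: "prob_space \<mu>" and \<nu>: "prob_space \<nu>" and T[measurable]: "T \<in> \<mu> \<Otimes>\<^sub>M \<nu> \<rightarrow>\<^sub>M N"
  defines "XE \<equiv> PiM UNIV (\<lambda>_. \<mu>) \<Otimes>\<^sub>M PiM UNIV (\<lambda>_. \<nu>)"
  shows "PiM (UNIV :: 'k::finite set) (\<lambda>_. distr (\<mu> \<Otimes>\<^sub>M \<nu>) N T)
    = distr XE (PiM UNIV (\<lambda>_. N)) (\<lambda>p k. T (fst p k, snd p k))"
proof -
  interpret \<mu>\<nu>: pair_prob_space \<mu> \<nu>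
    using \<mu> \<nu> by (simp add: pair_prob_space_def pair_sigma_finite_def prob_space_imp_sigma_finite)
  interpret D: product_prob_space "\<lambda>_::'k. distr (\<mu> \<Otimes>\<^sub>M \<nu>) N T" UNIV
    by (simp add: product_prob_space_def product_prob_space_axioms_def product_sigma_finite_def
        prob_space_imp_sigma_finite \<mu>\<nu>.P.prob_space_distr)
  have \<Phi>: "(\<lambda>p k. T (fst p k, snd p k)) \<in> XE \<rightarrow>\<^sub>M PiM UNIV (\<lambda>_. N)"
    unfolding XE_def
    by (rule measurable_PiM_single')
       (auto simp: space_pair_measure space_PiM PiE_iff intro!: measurable_space[OF T])
  show ?thesis
  proof (rule D.PiM_eqI[symmetric])
    fix A :: "'k \<Rightarrow> 'c set"
    assume A: "\<And>i. i \<in> UNIV \<Longrightarrow> A i \<in> sets (distr (\<mu> \<Otimes>\<^sub>M \<nu>) N T)"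
    have TA: "T -` A k \<inter> space (\<mu> \<Otimes>\<^sub>M \<nu>) \<in> sets (\<mu> \<Otimes>\<^sub>M \<nu>)" for k
      using A[of k] by simp
    have "emeasure (distr XE (PiM UNIV (\<lambda>_. N)) (\<lambda>p k. T (fst p k, snd p k))) (Pi\<^sub>E UNIV A)
        = emeasure XE ((\<lambda>p k. T (fst p k, snd p k)) -` Pi\<^sub>E UNIV A \<inter> space XE)"
      using A by (intro emeasure_distr[OF \<Phi>] sets_PiM_I_finite) auto
    also have "(\<lambda>p k. T (fst p k, snd p k)) -` Pi\<^sub>E UNIV A \<inter> space XE
        = {p \<in> space XE. \<forall>k. (fst p k, snd p k) \<in> T -` A k \<inter> space (\<mu> \<Otimes>\<^sub>M \<nu>)}"
      unfolding XE_def by (auto simp: space_pair_measure space_PiM PiE_iff)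
    also have "emeasure XE \<dots> = (\<Prod>k\<in>UNIV. emeasure (\<mu> \<Otimes>\<^sub>M \<nu>) (T -` A k \<inter> space (\<mu> \<Otimes>\<^sub>M \<nu>)))"
      unfolding XE_def by (rule emeasure_PiM_pair_measure_componentwise[OF \<mu> \<nu> TA])
    also have "\<dots> = (\<Prod>k\<in>UNIV. emeasure (distr (\<mu> \<Otimes>\<^sub>M \<nu>) N T) (A k))"
      using A by (simp add: emeasure_distr)
    finally show "emeasure (distr XE (PiM UNIV (\<lambda>_. N)) (\<lambda>p k. T (fst p k, snd p k))) (Pi\<^sub>E UNIV A)
        = (\<Prod>k\<in>UNIV. emeasure (distr (\<mu> \<Otimes>\<^sub>M \<nu>) N T) (A k))" .
  qed (auto intro!: sets_PiM_cong)
qed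

lemma (in prob_space) integral_affine_combination:
  fixes g1 g2 g3 :: "'a \<Rightarrow> real"
  assumes "integrable M g1" "integrable M g2" "integrable M g3"
  shows "(\<integral>x. a + b * g1 x + c * g2 x + d * g3 x \<partial>M)
    = a + b * (\<integral>x. g1 x \<partial>M) + c * (\<integral>x. g2 x \<partial>M) + d * (\<integral>x. g3 x \<partial>M)"
  using assms by (simp add: Bochner_Integration.integral_add prob_space)

lemma integrable_integral_cong_AE:
  fixes g h :: "'a \<Rightarrow> real"
  assumes "integrable M g" "h \<in> borel_measurable M" "AE x in M. g x = h x"
  shows "integrable M h \<and> integral\<^sup>L M g = integral\<^sup>L M h"
  using assms by (auto intro: integrable_cong_AE_imp integral_cong_AE)

lemma borel_measurable_fst_borel:
  "(fst :: 'a::second_countable_topology \<times> 'b::second_countable_topology \<Rightarrow> 'a) \<in> borel_measurable borel"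
  by (intro borel_measurable_continuous_onI continuous_on_fst continuous_on_id)

lemma measurable_PiM_fst:
  "(\<lambda>w k. fst (w k)) \<in> PiM UNIV (\<lambda>_. borel :: ('a::second_countable_topology \<times> 'b::second_countable_topology) measure)
     \<rightarrow>\<^sub>M PiM UNIV (\<lambda>_. borel)"
proof (rule measurable_PiM_single')
  show "(\<lambda>w. fst (w k)) \<in> borel_measurable (PiM UNIV (\<lambda>_. borel :: ('a \<times> 'b) measure))" for k
    by (rule measurable_compose[OF _ borel_measurable_fst_borel]) (rule measurable_component_singleton, simp)
qed simp

section \<open>The sampling model\<close>

locale linear_gaussian_model = prob_space M for M :: "'w measure" +
  fixes f :: "real^'d \<Rightarrow> real^'p"
    and x :: "'n::finite \<Rightarrow> 'w \<Rightarrow> real^'d" and y :: "'n \<Rightarrow> 'w \<Rightarrow> real"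
    and u :: "'m::finite \<Rightarrow> 'w \<Rightarrow> real^'d" and v :: "'m \<Rightarrow> 'w \<Rightarrow> real"
    and \<beta> :: "real^'p" and \<sigma> :: real
  assumes f_measurable[measurable]: "f \<in> borel_measurable borel"
    and indep: "indep_vars (\<lambda>_. borel)
        (\<lambda>k \<omega>. case k of Inl i \<Rightarrow> (x i \<omega>, y i \<omega>) | Inr j \<Rightarrow> (u j \<omega>, v j \<omega>)) UNIV"
    and ident: "\<exists>D. (\<forall>i. distr M borel (\<lambda>\<omega>. (x i \<omega>, y i \<omega>)) = D)
                   \<and> (\<forall>j. distr M borel (\<lambda>\<omega>. (u j \<omega>, v j \<omega>)) = D)"
    and cond_x: "\<And>i. cond_normal M (x i) (y i) f \<beta> \<sigma>"
    and sigma_pos: "\<sigma> > 0"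
begin

definition sample :: "'w \<Rightarrow> 'n + 'm \<Rightarrow> (real^'d) \<times> real" where
  "sample \<omega> k = (case k of Inl i \<Rightarrow> (x i \<omega>, y i \<omega>) | Inr j \<Rightarrow> (u j \<omega>, v j \<omega>))"

lemma measurable_sample_component[measurable]: "(\<lambda>\<omega>. sample \<omega> k) \<in> borel_measurable M"
  using indep unfolding indep_vars_def sample_def by auto

lemma measurable_training_row[measurable]: "(\<lambda>\<omega>. (x i \<omega>, y i \<omega>)) \<in> borel_measurable M"
  using measurable_sample_component[of "Inl i"] by (simp add: sample_def)

lemma measurable_sample[measurable]: "sample \<in> M \<rightarrow>\<^sub>M PiM UNIV (\<lambda>_. borel)"
  by (rule measurable_PiM_single') auto

text \<open>Any row may be used here, by identical distribution.\<close>
definition row_law :: "((real^'d) \<times> real) measure" where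
  "row_law = distr M borel (\<lambda>\<omega>. sample \<omega> (Inl undefined))"

lemma distr_sample_component: "distr M borel (\<lambda>\<omega>. sample \<omega> k) = row_law"
proof -
  obtain D where "\<And>i. distr M borel (\<lambda>\<omega>. (x i \<omega>, y i \<omega>)) = D"
     "\<And>j. distr M borel (\<lambda>\<omega>. (u j \<omega>, v j \<omega>)) = D"
    using ident by auto
  then have "distr M borel (\<lambda>\<omega>. sample \<omega> k) = D" for k
    by (cases k) (simp_all add: sample_def)
  then show ?thesis unfolding row_law_def by simp
qed

lemma sets_row_law[measurable_cong, simp]: "sets row_law = sets borel"
  by (simp add: row_law_def)

lemma prob_space_row_law: "prob_space row_law"
  unfolding row_law_def by (rule prob_space_distr) simp

definition predictor_law :: "(real^'d) measure" where
  "predictor_law = distr row_law borel fst"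

lemma sets_predictor_law[measurable_cong, simp]: "sets predictor_law = sets borel"
  by (simp add: predictor_law_def)

lemma space_predictor_law[simp]: "space predictor_law = UNIV"
  by (simp add: predictor_law_def)

lemma prob_space_predictor_law: "prob_space predictor_law"
  unfolding predictor_law_def by (rule prob_space.prob_space_distr[OF prob_space_row_law]) simp

lemma distr_predictor: "distr M borel (x i) = predictor_law"
proof -
  have "predictor_law = distr M borel (fst \<circ> (\<lambda>\<omega>. sample \<omega> (Inl i)))"
    unfolding predictor_law_def distr_sample_component[of "Inl i", symmetric] by (rule distr_distr) auto
  also have "fst \<circ> (\<lambda>\<omega>. sample \<omega> (Inl i)) = x i" by (auto simp: sample_def)
  finally show ?thesis ..
qed

lemma measurable_linear_model_row[measurable]: "linear_model_row f \<beta> \<sigma> \<in> borel_measurable borel"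
  unfolding linear_model_row_def by measurable

lemma linear_model_row_slice:
  "Pair z -` (linear_model_row f \<beta> \<sigma> -` (a \<times> b) \<inter> space (predictor_law \<Otimes>\<^sub>M std_normal)) =
     (if z \<in> a then {e. f z \<bullet> \<beta> + \<sigma> * e \<in> b} else {})"
  by (auto simp: linear_model_row_def space_pair_measure)

lemma emeasure_std_normal_response:
  assumes "b \<in> sets borel"
  shows "emeasure std_normal {e. f z \<bullet> \<beta> + \<sigma> * e \<in> b}
    = ennreal (measure (density lborel (normal_density (f z \<bullet> \<beta>) \<sigma>)) b)"
proof -
  interpret N: prob_space "density lborel (normal_density (f z \<bullet> \<beta>) \<sigma>)"
    by (rule prob_space_normal_density[OF sigma_pos])
  show ?thesis
    using emeasure_std_normal_affine[OF sigma_pos assms, of "f z \<bullet> \<beta>"] N.emeasure_eq_measure by simp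
qed

lemma measurable_normal_response_measure:
  assumes b: "b \<in> sets borel"
  shows "(\<lambda>z. measure (density lborel (normal_density (f z \<bullet> \<beta>) \<sigma>)) b) \<in> borel_measurable predictor_law"
proof -
  have [measurable]: "(UNIV :: (real^'d) set) \<times> b \<in> sets borel"
    using b by (auto intro: borel_Times)
  have "(\<lambda>z. emeasure std_normal (Pair z -` (linear_model_row f \<beta> \<sigma> -` (UNIV \<times> b)
      \<inter> space (predictor_law \<Otimes>\<^sub>M std_normal)))) \<in> borel_measurable predictor_law"
    by (intro sigma_finite_measure.measurable_emeasure_Pair[OF sigma_finite_std_normal]) measurable
  then have "(\<lambda>z. emeasure std_normal {e. f z \<bullet> \<beta> + \<sigma> * e \<in> b}) \<in> borel_measurable predictor_law"
    unfolding linear_model_row_slice by simp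
  then have "(\<lambda>z. enn2real (emeasure std_normal {e. f z \<bullet> \<beta> + \<sigma> * e \<in> b}))
      \<in> borel_measurable predictor_law"
    by measurable
  then show ?thesis
    by (simp add: emeasure_std_normal_response[OF b])
qed

lemma emeasure_row_law_rectangle:
  assumes a: "a \<in> sets borel" and b: "b \<in> sets borel"
  defines "T \<equiv> linear_model_row f \<beta> \<sigma>"
  shows "emeasure row_law (a \<times> b)
    = emeasure (predictor_law \<Otimes>\<^sub>M std_normal) (T -` (a \<times> b) \<inter> space (predictor_law \<Otimes>\<^sub>M std_normal))"
proof -
  let ?N = "\<lambda>z. density lborel (normal_density (f z \<bullet> \<beta>) \<sigma>)"
  interpret predictor_law: prob_space predictor_law by (rule prob_space_predictor_law)
  have [measurable]: "a \<times> b \<in> sets borel"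
    using a b by (rule borel_Times)
  have "integrable predictor_law (\<lambda>z. indicator a z * measure (?N z) b)"
    using a measurable_normal_response_measure[OF b]
    by (intro predictor_law.integrable_const_bound[where B=1])
       (auto simp: indicator_def intro!: prob_space.prob_le_1 prob_space_normal_density sigma_pos)
  moreover have "emeasure row_law (a \<times> b)
      = emeasure M {\<omega>\<in>space M. x undefined \<omega> \<in> a \<and> y undefined \<omega> \<in> b}"
    unfolding row_law_def
    by (subst emeasure_distr) (auto intro!: arg_cong[where f="emeasure M"] simp: sample_def)
  ultimately have "emeasure row_law (a \<times> b)
      = (\<integral>\<^sup>+z. ennreal (indicator a z * measure (?N z) b) \<partial>predictor_law)"
    using cond_x[of undefined] a b unfolding cond_normal_def distr_predictor
    by (simp add: nn_integral_eq_integral emeasure_eq_measure)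
  also have "\<dots> = (\<integral>\<^sup>+z. emeasure std_normal
      (Pair z -` (T -` (a \<times> b) \<inter> space (predictor_law \<Otimes>\<^sub>M std_normal))) \<partial>predictor_law)"
    unfolding T_def linear_model_row_slice
    by (intro nn_integral_cong) (simp add: emeasure_std_normal_response[OF b] indicator_def)
  also have "\<dots>
      = emeasure (predictor_law \<Otimes>\<^sub>M std_normal) (T -` (a \<times> b) \<inter> space (predictor_law \<Otimes>\<^sub>M std_normal))"
    unfolding T_def
    by (rule sigma_finite_measure.emeasure_pair_measure_alt[OF sigma_finite_std_normal, symmetric])
       (rule measurable_sets[OF _ \<open>a \<times> b \<in> sets borel\<close>], measurable)
  finally show ?thesis .
qed

lemma row_law_eq: "row_law = distr (predictor_law \<Otimes>\<^sub>M std_normal) borel (linear_model_row f \<beta> \<sigma>)"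
proof -
  let ?E = "{a \<times> b |a b. a \<in> sets (borel :: (real^'d) measure) \<and> b \<in> sets (borel :: real measure)}"
  interpret row_law: prob_space row_law by (rule prob_space_row_law)
  have generated: "sets row_law = sigma_sets (UNIV \<times> UNIV) ?E"
    by (simp add: borel_prod[symmetric] sets_pair_measure del: borel_prod)
  show ?thesis
  proof (rule measure_eqI_generator_eq[OF Int_stable_pair_measure_generator, where A="\<lambda>_. UNIV \<times> UNIV"])
    show "sets row_law = sigma_sets (UNIV \<times> UNIV) ?E"
      by (rule generated)
    show "sets (distr (predictor_law \<Otimes>\<^sub>M std_normal) borel (linear_model_row f \<beta> \<sigma>))
        = sigma_sets (UNIV \<times> UNIV) ?E"
      using generated by simp
    show "emeasure row_law X
        = emeasure (distr (predictor_law \<Otimes>\<^sub>M std_normal) borel (linear_model_row f \<beta> \<sigma>)) X"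
      if "X \<in> ?E" for X
    proof -
      have T: "linear_model_row f \<beta> \<sigma> \<in> predictor_law \<Otimes>\<^sub>M std_normal \<rightarrow>\<^sub>M borel"
        by measurable
      from that show ?thesis
        using emeasure_row_law_rectangle by (auto simp: emeasure_distr[OF T borel_Times])
    qed
    show "range (\<lambda>_. UNIV \<times> UNIV) \<subseteq> ?E"
      by (auto intro!: exI[of _ "UNIV :: (real^'d) set"] exI[of _ "UNIV :: real set"])
  qed (auto simp: row_law.emeasure_space_1[simplified])
qed

abbreviation predictors_law :: "('n + 'm \<Rightarrow> real^'d) measure" where
  "predictors_law \<equiv> PiM UNIV (\<lambda>_. predictor_law)"

lemma prob_space_predictors_law: "prob_space predictors_law"
  by (rule prob_space_PiM) (simp add: prob_space_predictor_law)

lemma distr_sample: "distr M (PiM UNIV (\<lambda>_. borel)) sample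
    = distr (predictors_law \<Otimes>\<^sub>M std_normal_vector) (PiM UNIV (\<lambda>_. borel)) (linear_model_sample f \<beta> \<sigma>)"
proof -
  have "indep_vars (\<lambda>_. borel) (\<lambda>k \<omega>. sample \<omega> k) UNIV"
    using indep unfolding sample_def .
  then have "distr M (PiM UNIV (\<lambda>_. borel)) sample = PiM UNIV (\<lambda>k. distr M borel (\<lambda>\<omega>. sample \<omega> k))"
    by (subst (asm) indep_vars_iff_distr_eq_PiM) (auto simp: restrict_UNIV)
  also have "\<dots> = PiM UNIV (\<lambda>_. distr (predictor_law \<Otimes>\<^sub>M std_normal) borel (linear_model_row f \<beta> \<sigma>))"
    by (simp add: distr_sample_component row_law_eq)
  also have "\<dots> = distr (predictors_law \<Otimes>\<^sub>M std_normal_vector) (PiM UNIV (\<lambda>_. borel))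
      (linear_model_sample f \<beta> \<sigma>)"
    unfolding linear_model_sample_def[abs_def]
    by (rule PiM_distr_pair_measure[OF prob_space_predictor_law std_normal.prob_space_axioms]) measurable
  finally show ?thesis .
qed

lemma measurable_linear_model_sample[measurable]:
  "linear_model_sample f \<beta> \<sigma> \<in> predictors_law \<Otimes>\<^sub>M std_normal_vector \<rightarrow>\<^sub>M PiM UNIV (\<lambda>_. borel)"
  unfolding linear_model_sample_def[abs_def] by (rule measurable_PiM_single') auto

lemma pair_prob_space_predictors_noise: "pair_prob_space predictors_law std_normal_vector"
proof -
  interpret X: prob_space predictors_law
    by (rule prob_space_predictors_law)
  interpret E: prob_space "std_normal_vector :: ('n + 'm \<Rightarrow> real) measure"
    by (rule prob_space_std_normal_vector)
  show ?thesis by unfold_locales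
qed

lemma integral_sample:
  fixes F :: "('n + 'm \<Rightarrow> (real^'d) \<times> real) \<Rightarrow> real"
  assumes F[measurable]: "F \<in> borel_measurable (PiM UNIV (\<lambda>_. borel))"
    and int: "integrable M (\<lambda>\<omega>. F (sample \<omega>))"
  shows "integrable predictors_law (\<lambda>xs. \<integral>e. F (linear_model_sample f \<beta> \<sigma> (xs, e)) \<partial>std_normal_vector)"
    and "(\<integral>\<omega>. F (sample \<omega>) \<partial>M)
      = (\<integral>xs. (\<integral>e. F (linear_model_sample f \<beta> \<sigma> (xs, e)) \<partial>std_normal_vector) \<partial>predictors_law)"
proof -
  interpret pair_prob_space predictors_law std_normal_vector
    by (rule pair_prob_space_predictors_noise)
  have "integrable (distr M (PiM UNIV (\<lambda>_. borel)) sample) F"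
    using int by (simp add: integrable_distr_eq)
  then have joint:
    "integrable (predictors_law \<Otimes>\<^sub>M std_normal_vector) (\<lambda>p. F (linear_model_sample f \<beta> \<sigma> p))"
    unfolding distr_sample by (simp add: integrable_distr_eq)
  then show "integrable predictors_law (\<lambda>xs. \<integral>e. F (linear_model_sample f \<beta> \<sigma> (xs, e)) \<partial>std_normal_vector)"
    by (rule integrable_fst')
  have "(\<integral>\<omega>. F (sample \<omega>) \<partial>M) = integral\<^sup>L (distr M (PiM UNIV (\<lambda>_. borel)) sample) F"
    by (simp add: integral_distr)
  also have "\<dots> = (\<integral>p. F (linear_model_sample f \<beta> \<sigma> p) \<partial>(predictors_law \<Otimes>\<^sub>M std_normal_vector))"
    unfolding distr_sample by (simp add: integral_distr)
  also have "\<dots> = (\<integral>xs. (\<integral>e. F (linear_model_sample f \<beta> \<sigma> (xs, e)) \<partial>std_normal_vector) \<partial>predictors_law)"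
    by (rule integral_fst'[OF joint, symmetric])
  finally show "(\<integral>\<omega>. F (sample \<omega>) \<partial>M)
      = (\<integral>xs. (\<integral>e. F (linear_model_sample f \<beta> \<sigma> (xs, e)) \<partial>std_normal_vector) \<partial>predictors_law)" .
qed

lemma AE_sample:
  assumes [measurable]: "Measurable.pred (PiM UNIV (\<lambda>_. borel)) P"
    and "AE \<omega> in M. P (sample \<omega>)"
    and "\<And>xs e. P (linear_model_sample f \<beta> \<sigma> (xs, e)) \<longleftrightarrow> R xs"
  shows "AE xs in predictors_law. R xs"
proof -
  interpret pair_prob_space predictors_law std_normal_vector
    by (rule pair_prob_space_predictors_noise)
  have "AE w in distr M (PiM UNIV (\<lambda>_. borel)) sample. P w"
    using assms(2) by (subst AE_distr_iff) auto
  then have "AE p in predictors_law \<Otimes>\<^sub>M std_normal_vector. P (linear_model_sample f \<beta> \<sigma> p)"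
    unfolding distr_sample by (subst (asm) AE_distr_iff) auto
  then have "AE xs in predictors_law. AE e in std_normal_vector. P (linear_model_sample f \<beta> \<sigma> (xs, e))"
    by (rule AE_pair)
  then show ?thesis
    unfolding assms(3) by (simp add: prob_space.AE_const[OF prob_space_std_normal_vector])
qed

definition predictors :: "'w \<Rightarrow> 'n + 'm \<Rightarrow> real^'d" where
  "predictors \<omega> = (\<lambda>k. fst (sample \<omega> k))"

lemma integral_predictors:
  fixes G :: "('n + 'm \<Rightarrow> real^'d) \<Rightarrow> real"
  assumes G[measurable]: "G \<in> borel_measurable (PiM UNIV (\<lambda>_. borel))"
    and int: "integrable M (\<lambda>\<omega>. G (predictors \<omega>))"
  shows "integrable predictors_law G" and "(\<integral>\<omega>. G (predictors \<omega>) \<partial>M) = (\<integral>xs. G xs \<partial>predictors_law)"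
proof -
  let ?F = "\<lambda>w :: 'n + 'm \<Rightarrow> (real^'d) \<times> real. G (\<lambda>k. fst (w k))"
  have [measurable]: "?F \<in> borel_measurable (PiM UNIV (\<lambda>_. borel))"
    using measurable_compose[OF measurable_PiM_fst G] by simp
  have const: "(\<integral>e. ?F (linear_model_sample f \<beta> \<sigma> (xs, e)) \<partial>std_normal_vector) = G xs" for xs
    using prob_space.prob_space[OF prob_space_std_normal_vector[where 'k="'n + 'm"]]
    by (simp add: linear_model_sample_def linear_model_row_def)
  show "integrable predictors_law G" "(\<integral>\<omega>. G (predictors \<omega>) \<partial>M) = (\<integral>xs. G xs \<partial>predictors_law)"
    using integral_sample[of ?F] int by (simp_all add: const predictors_def)
qed

lemma integral_sample_AE_eq:
  fixes F :: "('n + 'm \<Rightarrow> (real^'d) \<times> real) \<Rightarrow> real"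
  assumes [measurable]: "F \<in> borel_measurable (PiM UNIV (\<lambda>_. borel))"
    and [measurable]: "G \<in> borel_measurable predictors_law"
    and "integrable M (\<lambda>\<omega>. F (sample \<omega>))"
    and "AE xs in predictors_law. (\<integral>e. F (linear_model_sample f \<beta> \<sigma> (xs, e)) \<partial>std_normal_vector) = G xs"
  shows "(\<integral>\<omega>. F (sample \<omega>) \<partial>M) = (\<integral>xs. G xs \<partial>predictors_law)"
  unfolding integral_sample(2)[OF assms(1,3)]
  by (intro integral_cong_AE assms(4) borel_measurable_integrable[OF integral_sample(1)[OF assms(1,3)]])
     measurable

lemma measurable_predictors[measurable]: "predictors \<in> M \<rightarrow>\<^sub>M PiM UNIV (\<lambda>_. borel)"
  unfolding predictors_def
  by (rule measurable_PiM_single') (auto intro: measurable_compose[OF _ borel_measurable_fst_borel])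

lemma AE_det_gram_predictors_law:
  assumes "AE \<omega> in M. det (gram (design f (\<lambda>i. x i \<omega>))) \<noteq> 0"
  shows "AE xs in predictors_law. det (gram (design f (\<lambda>i. xs (Inl i)))) \<noteq> 0"
  using assms
  by (intro AE_sample[where P="\<lambda>w. det (gram (design f (\<lambda>i. fst (w (Inl i))))) \<noteq> 0"])
     (auto simp: sample_def linear_model_sample_def linear_model_row_def)

lemma integral_ols_test_error:
  assumes full_rank: "AE \<omega> in M. det (gram (design f (\<lambda>i. x i \<omega>))) \<noteq> 0"
  defines "t \<equiv> \<lambda>\<omega>. mat_trace (gram_ratio f (predictors \<omega>))"
  assumes int_E: "integrable M (\<lambda>\<omega>. ols_test_error f (sample \<omega>))" and int_t: "integrable M t"
  shows "(\<integral>\<omega>. ols_test_error f (sample \<omega>) \<partial>M) = \<sigma>\<^sup>2 * (1 + (\<integral>\<omega>. t \<omega> \<partial>M) / real CARD('n))"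
proof -
  let ?t = "\<lambda>xs. mat_trace (gram_ratio f xs)"
  note t = integral_predictors[of ?t, folded t_def, OF _ int_t]
  interpret predictors_law: prob_space predictors_law
    by (rule prob_space_predictors_law)
  have "(\<integral>\<omega>. ols_test_error f (sample \<omega>) \<partial>M)
      = (\<integral>xs. \<sigma>\<^sup>2 + \<sigma>\<^sup>2 / real CARD('n) * ?t xs \<partial>predictors_law)"
    using int_E AE_det_gram_predictors_law[OF full_rank]
    by (intro integral_sample_AE_eq)
       (auto elim!: AE_mp simp: ols_test_error_conditional_moments(1) field_simps)
  also have "\<dots> = \<sigma>\<^sup>2 * (1 + (\<integral>\<omega>. t \<omega> \<partial>M) / real CARD('n))"
    using t by (simp add: Bochner_Integration.integral_add predictors_law.prob_space field_simps)
  finally show ?thesis .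
qed

lemma integral_ols_test_error_square:
  assumes full_rank: "AE \<omega> in M. det (gram (design f (\<lambda>i. x i \<omega>))) \<noteq> 0"
  defines "t \<equiv> \<lambda>\<omega>. mat_trace (gram_ratio f (predictors \<omega>))"
    and "s \<equiv> \<lambda>\<omega>. mat_trace (gram_ratio f (predictors \<omega>) ** gram_ratio f (predictors \<omega>))"
    and "n \<equiv> real CARD('n)" and "m \<equiv> real CARD('m)"
  assumes int_E2: "integrable M (\<lambda>\<omega>. (ols_test_error f (sample \<omega>))\<^sup>2)"
    and int_t: "integrable M t" and int_t2: "integrable M (\<lambda>\<omega>. (t \<omega>)\<^sup>2)" and int_s: "integrable M s"
  shows "(\<integral>\<omega>. (ols_test_error f (sample \<omega>))\<^sup>2 \<partial>M) = \<sigma> ^ 4 * (1 + 2 / n * (\<integral>\<omega>. t \<omega> \<partial>M)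
    + (\<integral>\<omega>. (t \<omega>)\<^sup>2 \<partial>M) / n\<^sup>2 + 2 / m + 4 / (m * n) * (\<integral>\<omega>. t \<omega> \<partial>M) + 2 / n\<^sup>2 * (\<integral>\<omega>. s \<omega> \<partial>M))"
proof -
  let ?t = "\<lambda>xs. mat_trace (gram_ratio f xs)"
  let ?s = "\<lambda>xs. mat_trace (gram_ratio f xs ** gram_ratio f xs)"
  note t = integral_predictors[of ?t, folded t_def, OF _ int_t]
    and t2 = integral_predictors[of "\<lambda>xs. (?t xs)\<^sup>2"]
    and s = integral_predictors[of ?s, folded s_def, OF _ int_s]
  have integrable: "integrable predictors_law ?t" "integrable predictors_law (\<lambda>xs. (?t xs)\<^sup>2)"
      "integrable predictors_law ?s"
    using t t2 s int_t2 by (simp_all add: t_def)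
  have "n > 0" "m > 0"
    by (simp_all add: n_def m_def)
  have "(\<integral>\<omega>. (ols_test_error f (sample \<omega>))\<^sup>2 \<partial>M)
      = (\<integral>xs. \<sigma> ^ 4 * ((1 + ?t xs / n)\<^sup>2 + 2 / m + 4 / (m * n) * ?t xs + 2 / n\<^sup>2 * ?s xs)
          \<partial>predictors_law)"
    using int_E2 AE_det_gram_predictors_law[OF full_rank]
    by (intro integral_sample_AE_eq)
       (auto elim!: AE_mp simp: ols_test_error_conditional_moments(2) n_def m_def)
  also have "\<dots> = (\<integral>xs. \<sigma> ^ 4 * (1 + 2 / m) + (\<sigma> ^ 4 * (2 / n + 4 / (m * n))) * ?t xs
      + (\<sigma> ^ 4 / n\<^sup>2) * (?t xs)\<^sup>2 + (2 * \<sigma> ^ 4 / n\<^sup>2) * ?s xs \<partial>predictors_law)"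
    using \<open>n > 0\<close> \<open>m > 0\<close>
    by (intro Bochner_Integration.integral_cong refl) (simp add: field_simps power2_eq_square)
  also have "\<dots> = \<sigma> ^ 4 * (1 + 2 / n * (\<integral>\<omega>. t \<omega> \<partial>M) + (\<integral>\<omega>. (t \<omega>)\<^sup>2 \<partial>M) / n\<^sup>2
        + 2 / m + 4 / (m * n) * (\<integral>\<omega>. t \<omega> \<partial>M) + 2 / n\<^sup>2 * (\<integral>\<omega>. s \<omega> \<partial>M))"
    unfolding prob_space.integral_affine_combination[OF prob_space_predictors_law integrable]
    using t t2 s int_t2 by (simp add: t_def s_def field_simps)
  finally show ?thesis .
qed

lemma moments_test_error_estimate:
  fixes Ehat :: "'w \<Rightarrow> real" and A :: "'w \<Rightarrow> real^'p^'p"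
  assumes full_rank: "AE \<omega> in M. det (gram (design f (\<lambda>i. x i \<omega>))) \<noteq> 0"
    and Ehat: "AE \<omega> in M. Ehat \<omega> = ols_test_error f (sample \<omega>)"
    and A: "AE \<omega> in M. A \<omega> = gram_ratio f (predictors \<omega>)"
    and "integrable M Ehat" "integrable M (\<lambda>\<omega>. (Ehat \<omega>)\<^sup>2)"
    and "integrable M (\<lambda>\<omega>. mat_trace (A \<omega>))" "integrable M (\<lambda>\<omega>. (mat_trace (A \<omega>))\<^sup>2)"
    and "integrable M (\<lambda>\<omega>. mat_trace (A \<omega> ** A \<omega>))"
  defines "a \<equiv> (\<integral>\<omega>. mat_trace (A \<omega>) \<partial>M)" and "b \<equiv> (\<integral>\<omega>. (mat_trace (A \<omega>))\<^sup>2 \<partial>M)"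
    and "c \<equiv> (\<integral>\<omega>. mat_trace (A \<omega> ** A \<omega>) \<partial>M)"
    and "n \<equiv> real CARD('n)" and "m \<equiv> real CARD('m)"
  shows "(\<integral>\<omega>. Ehat \<omega> \<partial>M) = \<sigma>\<^sup>2 * (1 + a / n)"
    and "(\<integral>\<omega>. (Ehat \<omega>)\<^sup>2 \<partial>M) = \<sigma> ^ 4 * (1 + 2 / n * a + b / n\<^sup>2 + 2 / m + 4 / (m * n) * a + 2 / n\<^sup>2 * c)"
proof -
  have "AE \<omega> in M. (Ehat \<omega>)\<^sup>2 = (ols_test_error f (sample \<omega>))\<^sup>2"
    "AE \<omega> in M. mat_trace (A \<omega>) = mat_trace (gram_ratio f (predictors \<omega>))"
    "AE \<omega> in M. (mat_trace (A \<omega>))\<^sup>2 = (mat_trace (gram_ratio f (predictors \<omega>)))\<^sup>2"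
    "AE \<omega> in M. mat_trace (A \<omega> ** A \<omega>)
       = mat_trace (gram_ratio f (predictors \<omega>) ** gram_ratio f (predictors \<omega>))"
    using Ehat A by (auto elim: AE_mp)
  with assms(4-8) Ehat have cong:
    "integrable M (\<lambda>\<omega>. ols_test_error f (sample \<omega>))
       \<and> (\<integral>\<omega>. Ehat \<omega> \<partial>M) = (\<integral>\<omega>. ols_test_error f (sample \<omega>) \<partial>M)"
    "integrable M (\<lambda>\<omega>. (ols_test_error f (sample \<omega>))\<^sup>2)
       \<and> (\<integral>\<omega>. (Ehat \<omega>)\<^sup>2 \<partial>M) = (\<integral>\<omega>. (ols_test_error f (sample \<omega>))\<^sup>2 \<partial>M)"
    "integrable M (\<lambda>\<omega>. mat_trace (gram_ratio f (predictors \<omega>)))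
       \<and> a = (\<integral>\<omega>. mat_trace (gram_ratio f (predictors \<omega>)) \<partial>M)"
    "integrable M (\<lambda>\<omega>. (mat_trace (gram_ratio f (predictors \<omega>)))\<^sup>2)
       \<and> b = (\<integral>\<omega>. (mat_trace (gram_ratio f (predictors \<omega>)))\<^sup>2 \<partial>M)"
    "integrable M (\<lambda>\<omega>. mat_trace (gram_ratio f (predictors \<omega>) ** gram_ratio f (predictors \<omega>)))
       \<and> c = (\<integral>\<omega>. mat_trace (gram_ratio f (predictors \<omega>) ** gram_ratio f (predictors \<omega>)) \<partial>M)"
    unfolding a_def b_def c_def by - (rule integrable_integral_cong_AE; (fact | measurable))+
  show "(\<integral>\<omega>. Ehat \<omega> \<partial>M) = \<sigma>\<^sup>2 * (1 + a / n)"
    using integral_ols_test_error[OF full_rank cong(1,3)[THEN conjunct1]] cong by (simp add: n_def)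
  show "(\<integral>\<omega>. (Ehat \<omega>)\<^sup>2 \<partial>M) = \<sigma> ^ 4 * (1 + 2 / n * a + b / n\<^sup>2 + 2 / m + 4 / (m * n) * a + 2 / n\<^sup>2 * c)"
    using integral_ols_test_error_square[OF full_rank cong(2-5)[THEN conjunct1]] cong
    by (simp add: n_def m_def)
qed

lemma expectation_variance_test_error:
  fixes Ehat :: "'w \<Rightarrow> real" and A :: "'w \<Rightarrow> real^'p^'p"
  assumes full_rank: "AE \<omega> in M. det (gram (design f (\<lambda>i. x i \<omega>))) \<noteq> 0"
    and "AE \<omega> in M. Ehat \<omega> = ols_test_error f (sample \<omega>)"
    and "AE \<omega> in M. A \<omega> = gram_ratio f (predictors \<omega>)"
    and "integrable M Ehat" "integrable M (\<lambda>\<omega>. (Ehat \<omega>)\<^sup>2)"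
    and "integrable M (\<lambda>\<omega>. mat_trace (A \<omega>))" "integrable M (\<lambda>\<omega>. (mat_trace (A \<omega>))\<^sup>2)"
    and "integrable M (\<lambda>\<omega>. mat_trace (A \<omega> ** A \<omega>))"
  shows "Expect M Ehat = \<sigma>\<^sup>2 * (1 + (1 / real CARD('n)) * Expect M (\<lambda>\<omega>. mat_trace (A \<omega>)))
    \<and> Var M Ehat = \<sigma> ^ 4 * (2 / real CARD('m)
          + 4 / (real CARD('m) * real CARD('n)) * Expect M (\<lambda>\<omega>. mat_trace (A \<omega>))
          + 2 / (real CARD('n))\<^sup>2 * Expect M (\<lambda>\<omega>. mat_trace (A \<omega> ** A \<omega>))
          + 1 / (real CARD('n))\<^sup>2 * Var M (\<lambda>\<omega>. mat_trace (A \<omega>)))"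
proof -
  note moments = moments_test_error_estimate[OF assms]
  have variances: "Var M Ehat = (\<integral>\<omega>. (Ehat \<omega>)\<^sup>2 \<partial>M) - (Expect M Ehat)\<^sup>2"
    "Var M (\<lambda>\<omega>. mat_trace (A \<omega>))
       = (\<integral>\<omega>. (mat_trace (A \<omega>))\<^sup>2 \<partial>M) - (Expect M (\<lambda>\<omega>. mat_trace (A \<omega>)))\<^sup>2"
    unfolding Var_def Expect_def by (rule variance_eq[OF assms(4,5)], rule variance_eq[OF assms(6,7)])
  show ?thesis
    unfolding variances Expect_def moments by (simp add: field_simps power2_eq_square power4_eq_xxxx)
qed

end

theorem proposition1:
  fixes M :: "'w measure"
    and f :: "real^'d \<Rightarrow> real^'p"
    and x :: "'n::finite \<Rightarrow> 'w \<Rightarrow> real^'d" and y :: "'n \<Rightarrow> 'w \<Rightarrow> real"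
    and u :: "'m::finite \<Rightarrow> 'w \<Rightarrow> real^'d" and v :: "'m \<Rightarrow> 'w \<Rightarrow> real"
    and \<beta> :: "real^'p" and \<sigma> :: real
    and Fx :: "'w \<Rightarrow> real^'p^'n" and Fu :: "'w \<Rightarrow> real^'p^'m"
    and \<beta>hat :: "'w \<Rightarrow> real^'p" and Ehat :: "'w \<Rightarrow> real" and A :: "'w \<Rightarrow> real^'p^'p"
  assumes P: "prob_space M"
    and np: "CARD('n) \<ge> CARD('p)"
    and f_meas: "f \<in> borel_measurable borel"
    and indep: "prob_space.indep_vars M (\<lambda>_. borel)
        (\<lambda>k \<omega>. case k of Inl i \<Rightarrow> (x i \<omega>, y i \<omega>) | Inr j \<Rightarrow> (u j \<omega>, v j \<omega>)) UNIV"
    and ident: "\<exists>D. (\<forall>i. distr M borel (\<lambda>\<omega>. (x i \<omega>, y i \<omega>)) = D)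
                   \<and> (\<forall>j. distr M borel (\<lambda>\<omega>. (u j \<omega>, v j \<omega>)) = D)"
    and cond_x: "\<And>i. cond_normal M (x i) (y i) f \<beta> \<sigma>"
    and cond_u: "\<And>j. cond_normal M (u j) (v j) f \<beta> \<sigma>"
    and sigma_pos: "\<sigma> > 0"
    and Fx_def: "\<And>\<omega>. Fx \<omega> = design f (\<lambda>i. x i \<omega>)"
    and Fu_def: "\<And>\<omega>. Fu \<omega> = design f (\<lambda>j. u j \<omega>)"
    and rank: "AE \<omega> in M. rank (Fx \<omega>) = CARD('p)"
    and bhat_def: "\<And>\<omega>. \<beta>hat \<omega> =
        matrix_inv (transpose (Fx \<omega>) ** Fx \<omega>) *v (transpose (Fx \<omega>) *v (\<chi> i. y i \<omega>))"
    and Ehat_def: "\<And>\<omega>. Ehat \<omega> =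
        (1 / real CARD('m)) * (\<Sum>j\<in>UNIV. (v j \<omega> - f (u j \<omega>) \<bullet> \<beta>hat \<omega>)\<^sup>2)"
    and A_def: "\<And>\<omega>. A \<omega> = (real CARD('n) / real CARD('m)) *\<^sub>R
        (matrix_inv (transpose (Fx \<omega>) ** Fx \<omega>) ** (transpose (Fu \<omega>) ** Fu \<omega>))"
    and int_E: "integrable M Ehat" and int_E2: "integrable M (\<lambda>\<omega>. (Ehat \<omega>)\<^sup>2)"
    and int_trA: "integrable M (\<lambda>\<omega>. mat_trace (A \<omega>))"
    and int_trA2: "integrable M (\<lambda>\<omega>. (mat_trace (A \<omega>))\<^sup>2)"
    and int_trAA: "integrable M (\<lambda>\<omega>. mat_trace (A \<omega> ** A \<omega>))"
  shows "Expect M Ehat = \<sigma>\<^sup>2 * (1 + (1 / real CARD('n)) * Expect M (\<lambda>\<omega>. mat_trace (A \<omega>)))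
    \<and> Var M Ehat = \<sigma> ^ 4 * (2 / real CARD('m)
          + 4 / (real CARD('m) * real CARD('n)) * Expect M (\<lambda>\<omega>. mat_trace (A \<omega>))
          + 2 / (real CARD('n))\<^sup>2 * Expect M (\<lambda>\<omega>. mat_trace (A \<omega> ** A \<omega>))
          + 1 / (real CARD('n))\<^sup>2 * Var M (\<lambda>\<omega>. mat_trace (A \<omega>)))"
proof -
  interpret linear_gaussian_model M f x y u v \<beta> \<sigma>
    using P f_meas indep ident cond_x sigma_pos
    by (simp add: linear_gaussian_model_def linear_gaussian_model_axioms_def)
  have full_rank: "AE \<omega> in M. det (gram (design f (\<lambda>i. x i \<omega>))) \<noteq> 0"
    using rank by eventually_elim (simp add: Fx_def det_gram_nonzero)
  have "AE \<omega> in M. Ehat \<omega> = ols_test_error f (sample \<omega>) \<and> A \<omega> = gram_ratio f (predictors \<omega>)"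
    using full_rank
  proof eventually_elim
    case (elim \<omega>)
    then show ?case
      by (simp add: Ehat_def bhat_def A_def Fx_def Fu_def ols_test_error_def ols_estimate_def
          gram_ratio_def sample_def predictors_def gram_def[symmetric] matrix_inv_eq_cramer_inverse)
  qed
  then show ?thesis
    by (intro expectation_variance_test_error[OF full_rank] int_E int_E2 int_trA int_trA2 int_trAA)
       (auto elim: AE_mp)
qed

end
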